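(* Let $\ell$ be a generic line in $\mathbb P(\mathbb C^{3\times3})$, containing the three rank-two matrices $F_1,F_2,F_3$, and for $j=1,2,3$ let $e_j^x$ and $e_j^y$ generate the right and left nullspaces of $F_j$. For each $j$ let $(\pi_1^{j},\pi_2^{j})$ be a pair of linear projections $\mathbb P^3\dashrightarrow\mathbb P^2$ with non-coincident centers $c_1^j,c_2^j$ and fundamental matrix $F_j$, and let $Q_j\subset\mathbb P^3$ be the quadric corresponding to $\ell$, namely $Q_j=\{p:\pi_2^j(p)^\top M\pi_1^j(p)=0\}$ for any $M\in\ell$, $M\neq F_j$. Then: (1) each $Q_j$ is a permissible quadric containing $c_1^j,c_2^j$; (2) the three Cremona transformations $\pi_2^j\circ(\pi_1^j|_{Q_j})^{-1}$, $j=1,2,3$, are all equal to one and the same Cremona transformation $f$, whose base points are $e_1^x,e_2^x,e_3^x$ in the domain and $e_1^y,e_2^y,e_3^y$ in the codomain.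
   Context: Work over $\mathbb C$. A line in $\mathbb P(\mathbb C^{3\times3})$ is generic if it contains exactly three rank-two matrices. A linear projection $\pi:\mathbb P^3\dashrightarrow\mathbb P^2$ is $p\mapsto Ap$, $A\in\mathbb C^{3\times4}$ of rank three, with center spanning $\ker A$; the fundamental matrix of a pair of projections with distinct centers is the rank-two $F$ with $\pi_2(p)^\top F\pi_1(p)=0$ for all $p$. A permissible quadric is a smooth quadric through both centers not containing the line joining them. A quadratic Cremona transformation is a birational map $\mathbb P^2\dashrightarrow\mathbb P^2$ given by quadrics, with three base points and three exceptional lines (assumed distinct); the base points of its inverse are its base points in the codomain. *)

theory Defs
  imports "HOL-Analysis.Analysis"
begin

(* Points of projective space P^{n-1} are represented by nonzero vectors in complex^'n;
   two nonzero vectors represent the same point iff they are proportional. *)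

definition proportional :: "complex^'n \<Rightarrow> complex^'n \<Rightarrow> bool" where
  "proportional x y \<longleftrightarrow> (\<exists>c. c \<noteq> 0 \<and> x = c *s y)"

definition msc :: "complex \<Rightarrow> complex^'n^'m \<Rightarrow> complex^'n^'m" where
  "msc c M = (\<chi> i j. c * M$i$j)"

definition mproportional :: "complex^'n^'m \<Rightarrow> complex^'n^'m \<Rightarrow> bool" where
  "mproportional M N \<longleftrightarrow> (\<exists>c. c \<noteq> 0 \<and> M = msc c N)"

definition on_line :: "complex^3^3 \<Rightarrow> complex^3^3 \<Rightarrow> complex^3^3 \<Rightarrow> bool" where
  "on_line L0 L1 M \<longleftrightarrow> M \<noteq> 0 \<and> (\<exists>a b. M = msc a L0 + msc b L1)"

definition mat_lin_indep :: "complex^3^3 \<Rightarrow> complex^3^3 \<Rightarrow> bool" where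
  "mat_lin_indep L0 L1 \<longleftrightarrow> (\<forall>a b. msc a L0 + msc b L1 = 0 \<longrightarrow> a = 0 \<and> b = 0)"

definition generic_line_with ::
  "complex^3^3 \<Rightarrow> complex^3^3 \<Rightarrow> (nat \<Rightarrow> complex^3^3) \<Rightarrow> bool" where
  "generic_line_with L0 L1 F \<longleftrightarrow>
     mat_lin_indep L0 L1 \<and>
     (\<forall>j\<in>{1,2,3}. on_line L0 L1 (F j) \<and> rank (F j) = 2) \<and>
     (\<forall>j\<in>{1,2,3}. \<forall>k\<in>{1,2,3}. j \<noteq> k \<longrightarrow> \<not> mproportional (F j) (F k)) \<and>
     (\<forall>M. on_line L0 L1 M \<and> rank M = 2 \<longrightarrow> (\<exists>j\<in>{1,2,3}. mproportional M (F j)))"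

definition bil :: "complex^'m \<Rightarrow> complex^'n^'m \<Rightarrow> complex^'n \<Rightarrow> complex" where
  "bil x M y = (\<Sum>i\<in>UNIV. \<Sum>k\<in>UNIV. x$i * M$i$k * y$k)"

(* linear projection P^3 --> P^2, p \<mapsto> A p, A of rank three; its center spans ker A *)
definition is_projection :: "complex^4^3 \<Rightarrow> bool" where
  "is_projection A \<longleftrightarrow> rank A = 3"

definition is_center :: "complex^4^3 \<Rightarrow> complex^4 \<Rightarrow> bool" where
  "is_center A c \<longleftrightarrow> c \<noteq> 0 \<and> A *v c = 0"

definition is_fundamental_matrix :: "complex^4^3 \<Rightarrow> complex^4^3 \<Rightarrow> complex^3^3 \<Rightarrow> bool" where
  "is_fundamental_matrix A1 A2 F \<longleftrightarrow>
     rank F = 2 \<and> (\<forall>p. bil (A2 *v p) F (A1 *v p) = 0)"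

definition qf :: "complex^4^4 \<Rightarrow> complex^4 \<Rightarrow> complex" where
  "qf N p = bil p N p"

(* the quadric Q = {p : pi_2(p)^T M pi_1(p) = 0} has the form p^T (A2^T M A1) p *)
definition quad_of :: "complex^4^3 \<Rightarrow> complex^4^3 \<Rightarrow> complex^3^3 \<Rightarrow> complex^4^4" where
  "quad_of A1 A2 M = transpose A2 ** M ** A1"

(* smooth quadric: the form is not identically zero and no point of the quadric is singular,
   i.e. the gradient (N + N^T) p of p \<mapsto> p^T N p does not vanish at any point of it *)
definition smooth_quadric :: "complex^4^4 \<Rightarrow> bool" where
  "smooth_quadric N \<longleftrightarrow> (\<exists>p. qf N p \<noteq> 0) \<and>
     (\<forall>p. p \<noteq> 0 \<and> qf N p = 0 \<longrightarrow> (N + transpose N) *v p \<noteq> 0)"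

definition permissible_quadric :: "complex^4^4 \<Rightarrow> complex^4 \<Rightarrow> complex^4 \<Rightarrow> bool" where
  "permissible_quadric N c1 c2 \<longleftrightarrow>
     smooth_quadric N \<and> qf N c1 = 0 \<and> qf N c2 = 0 \<and>
     \<not> (\<forall>a b. qf N (a *s c1 + b *s c2) = 0)"

definition quadratic_map :: "(complex^3 \<Rightarrow> complex^3) \<Rightarrow> bool" where
  "quadratic_map f \<longleftrightarrow> (\<exists>S :: complex^3^3^3.
      \<forall>x. f x = (\<chi> i. \<Sum>a\<in>UNIV. \<Sum>b\<in>UNIV. S$i$a$b * x$a * x$b))"

definition base_points :: "(complex^3 \<Rightarrow> complex^3) \<Rightarrow> (complex^3) set" where
  "base_points f = {x. x \<noteq> 0 \<and> f x = 0}"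

definition three_distinct_points :: "(complex^3) set \<Rightarrow> bool" where
  "three_distinct_points B \<longleftrightarrow> (\<exists>p1 p2 p3.
      p1 \<noteq> 0 \<and> p2 \<noteq> 0 \<and> p3 \<noteq> 0 \<and>
      \<not> proportional p1 p2 \<and> \<not> proportional p1 p3 \<and> \<not> proportional p2 p3 \<and>
      B = {x. proportional x p1 \<or> proportional x p2 \<or> proportional x p3})"

(* f is a quadratic Cremona transformation with (quadratic) inverse g:
   g o f and f o g are the identity as rational maps, and both have three distinct base points *)
definition quadratic_cremona :: "(complex^3 \<Rightarrow> complex^3) \<Rightarrow> (complex^3 \<Rightarrow> complex^3) \<Rightarrow> bool" where
  "quadratic_cremona f g \<longleftrightarrow>
     quadratic_map f \<and> quadratic_map g \<and>
     (\<forall>x. \<exists>c. g (f x) = c *s x) \<and> (\<exists>x. g (f x) \<noteq> 0) \<and>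
     (\<forall>y. \<exists>c. f (g y) = c *s y) \<and> (\<exists>y. f (g y) \<noteq> 0) \<and>
     three_distinct_points (base_points f) \<and> three_distinct_points (base_points g)"

(* the rational map f equals pi_2 o (pi_1|_Q)^{-1}, i.e. f(pi_1 p) = pi_2 p for every point p
   of the quadric Q at which both sides are defined *)
definition equals_proj_composite ::
  "(complex^3 \<Rightarrow> complex^3) \<Rightarrow> complex^4^3 \<Rightarrow> complex^4^3 \<Rightarrow> complex^4^4 \<Rightarrow> bool" where
  "equals_proj_composite f A1 A2 N \<longleftrightarrow>
     (\<forall>p. p \<noteq> 0 \<and> qf N p = 0 \<and> A1 *v p \<noteq> 0 \<and> A2 *v p \<noteq> 0 \<and> f (A1 *v p) \<noteq> 0
          \<longrightarrow> proportional (f (A1 *v p)) (A2 *v p))"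

end

theory Submission
  imports Defs "HOL-Computational_Algebra.Polynomial"
begin

(* Let L0, L1 span the line and put f x = (L0 x) \<times> (L1 x).  For a point p of Q_j, the images
   x = \<pi>1 p and y = \<pi>2 p satisfy y^T F_j x = 0 and y^T M x = 0, hence y^T L x = 0 for every L
   on the line; so y is proportional to f x, independently of j and M.  The base points of f are
   the x for which L0 x and L1 x are dependent, i.e. the kernels of the singular members of the
   line, and these are exactly the F_j; the inverse of f is the same construction for the
   transposed line.
   For permissibility, choose coordinates on P^3 adapted to the two centres.  There F_j becomes
   a skew matrix with a single pair of entries \<plusminus>\<phi>, and, writing N for M in these
   coordinates, det (M + l F_j) becomes the quadratic N11 \<phi>^2 l^2 + \<phi> X l + det N in l.
   As the line meets the cubic {det = 0} in F_j and two more points, this quadratic has two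
   distinct roots: so N11 \<noteq> 0, i.e. the line through the centres is not contained in Q_j,
   and 4 N11 det N \<noteq> X^2, which is exactly the condition for the gradient of the quadric
   to vanish only at 0. *)

section \<open>Vector algebra in dimension three\<close>

definition dot :: "'a::comm_ring_1^'n \<Rightarrow> 'a^'n \<Rightarrow> 'a" where
  "dot x y = (\<Sum>i\<in>UNIV. x$i * y$i)"

definition cross :: "'a::comm_ring_1^3 \<Rightarrow> 'a^3 \<Rightarrow> 'a^3" where
  "cross a b = vector [a$2*b$3 - a$3*b$2, a$3*b$1 - a$1*b$3, a$1*b$2 - a$2*b$1]"

lemma cross_nth [simp]:
  "cross a b $ 1 = a$2*b$3 - a$3*b$2"
  "cross a b $ 2 = a$3*b$1 - a$1*b$3"
  "cross a b $ 3 = a$1*b$2 - a$2*b$1"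
  by (simp_all add: cross_def)

lemma cross_0 [simp]: "cross 0 b = 0" "cross a 0 = 0"
  by (simp_all add: cross_def vec_eq_iff forall_3)

lemma vec3_eq_iff: "(x::'a^3) = y \<longleftrightarrow> x$1 = y$1 \<and> x$2 = y$2 \<and> x$3 = y$3"
  by (simp add: vec_eq_iff forall_3)

lemma vec3_eq_0_iff: "(x::'a::zero^3) = 0 \<longleftrightarrow> x$1 = 0 \<and> x$2 = 0 \<and> x$3 = 0"
  by (simp add: vec3_eq_iff)

lemma dot_3: "dot (a::'a::comm_ring_1^3) b = a$1*b$1 + a$2*b$2 + a$3*b$3"
  by (simp add: dot_def sum_3)

lemma dot_commute: "dot x y = dot y x"
  by (simp add: dot_def mult.commute)

lemma dot_add_left: "dot (x + x') y = dot x y + dot x' y"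
  and dot_add_right: "dot x (y + y') = dot x y + dot x y'"
  and dot_scale_left: "dot (c *s x) y = c * dot x y"
  and dot_scale_right: "dot x (c *s y) = c * dot x y"
  by (simp_all add: dot_def sum.distrib sum_distrib_left algebra_simps)

lemma dot_0_left [simp]: "dot 0 x = 0"
  and dot_0_right [simp]: "dot x 0 = 0"
  by (simp_all add: dot_def)

lemmas dot_linear = dot_add_left dot_add_right dot_scale_left dot_scale_right

lemma dot_matrix_vector_mult: "dot z (A *v x) = dot (z v* A) x"
proof -
  have "dot z (A *v x) = (\<Sum>i\<in>UNIV. \<Sum>j\<in>UNIV. z$i * (A$i$j * x$j))"
    by (simp add: dot_def matrix_vector_mult_def sum_distrib_left)
  also have "\<dots> = (\<Sum>j\<in>UNIV. \<Sum>i\<in>UNIV. z$i * (A$i$j * x$j))"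
    by (rule sum.swap)
  also have "\<dots> = dot (z v* A) x"
    by (simp add: dot_def vector_matrix_mult_def sum_distrib_left mult_ac)
  finally show ?thesis .
qed

lemma dot_row: "dot (row i A) x = (A *v x) $ i"
  by (simp add: dot_def row_def matrix_vector_mult_def)

lemma orthogonal_all_imp_0: "(\<And>x. dot w x = 0) \<Longrightarrow> w = 0"
proof -
  assume "\<And>x. dot w x = 0"
  then have "dot w (axis k 1) = 0" for k by blast
  then show "w = 0"
    by (simp add: vec_eq_iff dot_def axis_def if_distrib cong: if_cong)
qed

lemma dot_cross_left: "dot (cross a b) a = 0"
  and dot_cross_right: "dot (cross a b) b = 0"
  by (simp_all add: dot_3 algebra_simps)

lemma cross_cross: "cross (cross a b) c = dot a c *s b - dot b c *s a"
  by (simp add: vec3_eq_iff dot_3 algebra_simps)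

lemma cross_eq_0_imp_parallel:
  fixes a b :: "'a::field^3"
  assumes "a \<noteq> 0" "cross a b = 0"
  shows "\<exists>\<mu>. b = \<mu> *s a"
proof -
  have e: "a$2*b$3 = a$3*b$2" "a$3*b$1 = a$1*b$3" "a$1*b$2 = a$2*b$1"
    using assms(2) by (simp_all add: vec3_eq_0_iff)
  from assms(1) consider "a$1 \<noteq> 0" | "a$2 \<noteq> 0" | "a$3 \<noteq> 0"
    by (auto simp: vec3_eq_0_iff)
  then show ?thesis
  proof cases
    case 1
    with e have "b = (b$1 / a$1) *s a" by (simp add: vec3_eq_iff field_simps)
    then show ?thesis ..
  next
    case 2
    with e have "b = (b$2 / a$2) *s a" by (simp add: vec3_eq_iff field_simps)
    then show ?thesis ..
  next
    case 3
    with e have "b = (b$3 / a$3) *s a" by (simp add: vec3_eq_iff field_simps)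
    then show ?thesis ..
  qed
qed

lemma cross_eq_0_iff_dependent:
  fixes a b :: "'a::field^3"
  shows "cross a b = 0 \<longleftrightarrow> (\<exists>s t. (s \<noteq> 0 \<or> t \<noteq> 0) \<and> s *s a + t *s b = 0)"
proof
  assume c: "cross a b = 0"
  show "\<exists>s t. (s \<noteq> 0 \<or> t \<noteq> 0) \<and> s *s a + t *s b = 0"
  proof (cases "a = 0")
    case True
    then show ?thesis by (intro exI[of _ 1] exI[of _ 0]) simp
  next
    case False
    then obtain \<mu> where "b = \<mu> *s a" using cross_eq_0_imp_parallel c by blast
    then show ?thesis by (intro exI[of _ \<mu>] exI[of _ "-1"]) simp
  qed
next
  assume "\<exists>s t. (s \<noteq> 0 \<or> t \<noteq> 0) \<and> s *s a + t *s b = 0"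
  then obtain s t where st: "s \<noteq> 0 \<or> t \<noteq> 0" "s *s a + t *s b = 0" by blast
  then have e: "s * a$i + t * b$i = 0" for i by (simp add: vec_eq_iff)
  from st(1) show "cross a b = 0"
  proof
    assume "s \<noteq> 0"
    then have "a$i = - (t / s) * b$i" for i using e[of i] by (simp add: field_simps add_eq_0_iff2)
    then show ?thesis by (simp add: vec3_eq_0_iff algebra_simps)
  next
    assume "t \<noteq> 0"
    then have "b$i = - (s / t) * a$i" for i using e[of i] by (simp add: field_simps add_eq_0_iff2)
    then show ?thesis by (simp add: vec3_eq_0_iff algebra_simps)
  qed
qed

lemma orthogonal_two_imp_parallel_cross:
  fixes a b y :: "'a::field^3"
  assumes "dot a y = 0" "dot b y = 0" "cross a b \<noteq> 0"
  shows "\<exists>\<mu>. y = \<mu> *s cross a b"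
proof -
  have "cross (cross a b) y = 0" using assms by (simp add: cross_cross)
  then show ?thesis using cross_eq_0_imp_parallel assms(3) by blast
qed

section \<open>Rank of matrices with three rows\<close>

lemma det_eq_0_iff_ker: "det (A::'a::field^'n^'n) = 0 \<longleftrightarrow> (\<exists>x. x \<noteq> 0 \<and> A *v x = 0)"
  by (metis invertible_det_nz invertible_left_inverse matrix_left_invertible_ker)

lemma rank_le_2_if_left_ker:
  fixes A :: "'a::field^'n^3"
  assumes "w v* A = 0" "w \<noteq> 0"
  shows "rank A \<le> 2"
proof -
  obtain i where wi: "w$i \<noteq> 0" using assms(2) by (metis vec_eq_iff zero_index)
  let ?R = "(\<lambda>k. row k A) ` (UNIV - {i})"
  have "(\<Sum>k\<in>UNIV. w$k *s row k A) = w v* A"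
    by (simp add: vec_eq_iff vector_matrix_mult_def row_def sum_component mult.commute)
  then have "w$i *s row i A + (\<Sum>k\<in>UNIV-{i}. w$k *s row k A) = 0"
    using assms(1) by (simp add: sum.remove)
  then have eq: "row i A = (- 1 / w$i) *s (\<Sum>k\<in>UNIV-{i}. w$k *s row k A)"
    using wi by (simp add: vec_eq_iff field_simps add_eq_0_iff2 sum_component)
  have "row i A \<in> vec.span ?R"
    unfolding eq by (intro vec.span_scale vec.span_sum) (auto intro: vec.span_base)
  then have "rows A \<subseteq> vec.span ?R"
    by (auto simp: rows_def intro: vec.span_base)
  then have "vec.dim (rows A) \<le> card ?R" by (intro vec.dim_le_card) auto
  also have "\<dots> \<le> card (UNIV - {i})" by (rule card_image_le) simp
  also have "\<dots> = 2" by simp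
  finally show ?thesis by (simp add: row_rank_def_gen)
qed

lemma rank_3_imp_left_ker_0:
  fixes A :: "'a::field^'n^3"
  assumes "rank A = 3" "w v* A = 0"
  shows "w = 0"
  using rank_le_2_if_left_ker[of w A] assms by force

lemma rank_ge_2_if_cross_rows:
  fixes X :: "'a::field^3^3"
  assumes "cross (row a X) (row b X) \<noteq> 0"
  shows "rank X \<ge> 2"
proof -
  have "row a X \<noteq> row b X" using assms by (auto simp: vec3_eq_0_iff)
  then have c: "card {row a X, row b X} = 2" by simp
  have "row b X \<noteq> 0" using assms by (auto simp: vec3_eq_0_iff)
  moreover have "row a X \<notin> vec.span {row b X}"
    using assms by (auto simp: vec.span_singleton vec3_eq_0_iff algebra_simps)
  ultimately have "vec.independent {row a X, row b X}"
    by (simp add: vec.independent_insert)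
  then have "card {row a X, row b X} \<le> vec.dim (rows X)"
    by (intro vec.independent_card_le_dim) (auto simp: rows_def)
  then show ?thesis using c by (simp add: row_rank_def_gen)
qed

lemma rank_le_1_if_cross_rows:
  fixes X :: "'a::field^3^3"
  assumes "\<forall>a b. cross (row a X) (row b X) = 0"
  shows "rank X \<le> 1"
proof (cases "\<exists>a. row a X \<noteq> 0")
  case True
  then obtain a where a: "row a X \<noteq> 0" by blast
  have "rows X \<subseteq> vec.span {row a X}"
  proof
    fix r assume "r \<in> rows X"
    then obtain b where "r = row b X" by (auto simp: rows_def)
    then obtain \<mu> where "r = \<mu> *s row a X" using cross_eq_0_imp_parallel[OF a] assms by blast
    then show "r \<in> vec.span {row a X}" by (auto simp: vec.span_singleton)
  qed
  then have "vec.dim (rows X) \<le> card {row a X}" by (intro vec.dim_le_card) auto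
  then show ?thesis by (simp add: row_rank_def_gen)
next
  case False
  then have "rows X \<subseteq> {0}" by (auto simp: rows_def)
  then have "vec.dim (rows X) \<le> card {0::'a^3}" by (intro vec.dim_le_card) auto
  then show ?thesis by (simp add: row_rank_def_gen)
qed

lemma rank_3_if_det_nonzero:
  fixes X :: "'a::field^3^3"
  assumes "det X \<noteq> 0"
  shows "rank X = 3"
proof -
  have ind: "vec.independent (rows X)" using det_dependent_rows assms by blast
  have "row i X \<noteq> row j X" if "i \<noteq> j" for i j
    using det_identical_rows[OF that] assms by auto
  moreover have "rows X = {row 1 X, row 2 X, row 3 X}" by (auto simp: rows_def UNIV_3)
  ultimately have "card (rows X) = 3" by simp
  then show ?thesis
    using vec.dim_eq_card_independent[OF ind] by (simp add: row_rank_def_gen)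
qed

lemma rank_eq_2_iff:
  fixes X :: "'a::field^3^3"
  shows "rank X = 2 \<longleftrightarrow> det X = 0 \<and> (\<exists>a b. cross (row a X) (row b X) \<noteq> 0)"
proof
  assume "rank X = 2"
  then show "det X = 0 \<and> (\<exists>a b. cross (row a X) (row b X) \<noteq> 0)"
    using rank_3_if_det_nonzero rank_le_1_if_cross_rows by fastforce
next
  assume "det X = 0 \<and> (\<exists>a b. cross (row a X) (row b X) \<noteq> 0)"
  moreover obtain w where "w \<noteq> 0" "w v* X = 0"
    using calculation det_eq_0_iff_ker[of "transpose X"] by (auto simp: det_transpose)
  ultimately show "rank X = 2"
    using rank_le_2_if_left_ker rank_ge_2_if_cross_rows by (metis le_antisym)
qed

lemma rank_eq_2_transpose:
  fixes X :: "'a::field^3^3"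
  shows "rank (transpose X) = 2 \<longleftrightarrow> rank X = 2"
proof -
  have "(\<forall>a b. cross (row a X) (row b X) = 0) \<longleftrightarrow> (\<forall>a b. cross (column a X) (column b X) = 0)"
    by (simp add: forall_3 vec3_eq_0_iff row_def column_def algebra_simps)
      (auto simp: algebra_simps)
  then show ?thesis
    unfolding rank_eq_2_iff det_transpose row_transpose by blast
qed

lemma rank_2_ker_parallel:
  fixes X :: "'a::field^3^3"
  assumes "rank X = 2" "X *v u = 0" "u \<noteq> 0" "X *v v = 0"
  shows "\<exists>\<mu>. v = \<mu> *s u"
proof (cases "cross u v = 0")
  case True
  then show ?thesis using cross_eq_0_imp_parallel[OF assms(3)] by blast
next
  case False
  \<comment> \<open>otherwise every row, being orthogonal to \<open>u\<close> and \<open>v\<close>, is parallel to their cross product,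
    and the rank would be at most one\<close>
  have "rows X \<subseteq> vec.span {cross u v}"
  proof
    fix r assume "r \<in> rows X"
    then obtain i where i: "r = row i X" by (auto simp: rows_def)
    have "dot u r = 0" "dot v r = 0"
      using dot_row[of i X u] dot_row[of i X v] assms(2,4) i by (simp_all add: dot_commute)
    then obtain \<mu> where "r = \<mu> *s cross u v"
      using orthogonal_two_imp_parallel_cross False by blast
    then show "r \<in> vec.span {cross u v}" by (auto simp: vec.span_singleton)
  qed
  then have "vec.dim (rows X) \<le> card {cross u v}" by (intro vec.dim_le_card) auto
  then show ?thesis using assms(1) by (simp add: row_rank_def_gen)
qed

section \<open>Pencils of matrices\<close>

lemma msc_nth [simp]: "msc c M $ i $ j = c * M$i$j"
  by (simp add: msc_def)

lemma msc_eq_0_iff: "msc c X = 0 \<longleftrightarrow> c = 0 \<or> X = 0"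
  by (auto simp: vec_eq_iff)

lemma msc_0 [simp]: "msc 0 X = 0"
  by (simp add: vec_eq_iff)

lemma msc_1 [simp]: "msc 1 X = X"
  by (simp add: vec_eq_iff)

lemma msc_msc: "msc a (msc b X) = msc (a * b) X"
  by (simp add: vec_eq_iff)

lemma msc_matrix_vector_mult: "msc c X *v x = c *s (X *v x)"
  by (simp add: vec_eq_iff matrix_vector_mult_def sum_distrib_left mult.assoc)

lemma pencil_matrix_vector_mult: "(msc a X + msc b Y) *v x = a *s (X *v x) + b *s (Y *v x)"
  by (simp add: matrix_vector_mult_add_rdistrib msc_matrix_vector_mult)

lemma transpose_msc: "transpose (msc c X) = msc c (transpose X)"
  by (simp add: vec_eq_iff transpose_def)

lemma det_msc: "det (msc c (X::complex^3^3)) = c^3 * det X"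
  by (simp add: det_3 algebra_simps power3_eq_cube)

lemma det_pencil_singular_ends:
  fixes X Y :: "complex^3^3"
  assumes "det X = 0" "det Y = 0"
  obtains s t where "\<And>l. det (X + msc l Y) = l * (s + l * t)"
proof -
  define mixed where "mixed A B =
    det (\<chi> i j. if i = 1 then B$i$j else A$i$j) + det (\<chi> i j. if i = 2 then B$i$j else A$i$j)
      + det (\<chi> i j. if i = 3 then B$i$j else A$i$j)" for A B :: "complex^3^3"
  have "det (X + msc l Y) = det X + l * mixed X Y + l^2 * mixed Y X + l^3 * det Y" for l
    by (simp add: mixed_def det_3 algebra_simps power2_eq_square power3_eq_cube)
  then have "det (X + msc l Y) = l * (mixed X Y + l * mixed Y X)" for l
    using assms by (simp add: algebra_simps power2_eq_square)
  then show ?thesis by (rule that)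
qed

lemma not_mproportional_imp_independent:
  assumes "X \<noteq> 0" "Y \<noteq> 0" "\<not> mproportional X Y" "msc a X + msc b Y = 0"
  shows "a = 0 \<and> b = 0"
proof (cases "a = 0")
  case True
  then have "msc b Y = 0" using assms(4) by (simp add: vec_eq_iff)
  then show ?thesis using True assms(2) by (simp add: msc_eq_0_iff)
next
  case False
  with assms(4) have X: "X = msc (- b / a) Y"
    by (simp add: vec_eq_iff field_simps) (metis add_eq_0_iff2 mult.commute)
  then have "- b / a \<noteq> 0" using assms(1) by (auto simp: msc_eq_0_iff)
  with X assms(3) show ?thesis unfolding mproportional_def by blast
qed

definition in_pencil :: "complex^3^3 \<Rightarrow> complex^3^3 \<Rightarrow> complex^3^3 \<Rightarrow> bool" where
  "in_pencil L0 L1 M \<longleftrightarrow> (\<exists>a b. M = msc a L0 + msc b L1)"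

lemma on_line_iff_in_pencil: "on_line L0 L1 M \<longleftrightarrow> M \<noteq> 0 \<and> in_pencil L0 L1 M"
  by (simp add: on_line_def in_pencil_def)

lemma in_pencil_generators: "in_pencil L0 L1 L0" "in_pencil L0 L1 L1"
  unfolding in_pencil_def by (metis add.right_neutral add.left_neutral msc_0 msc_1)+

lemma in_pencil_combination:
  assumes "in_pencil L0 L1 X" "in_pencil L0 L1 Y"
  shows "in_pencil L0 L1 (msc a X + msc b Y)"
proof -
  obtain a1 b1 a2 b2 where "X = msc a1 L0 + msc b1 L1" "Y = msc a2 L0 + msc b2 L1"
    using assms by (auto simp: in_pencil_def)
  then show ?thesis unfolding in_pencil_def
    by (intro exI[of _ "a*a1 + b*a2"] exI[of _ "a*b1 + b*b2"]) (simp add: vec_eq_iff algebra_simps)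
qed

lemma in_pencil_span_members:
  assumes "mat_lin_indep L0 L1"
    and X: "on_line L0 L1 X" and Y: "on_line L0 L1 Y" and XY: "\<not> mproportional X Y"
    and "in_pencil L0 L1 Z"
  shows "\<exists>\<alpha> \<beta>. Z = msc \<alpha> X + msc \<beta> Y"
proof -
  obtain a1 b1 where x: "X = msc a1 L0 + msc b1 L1" and X0: "X \<noteq> 0"
    using X by (auto simp: on_line_def)
  obtain a2 b2 where y: "Y = msc a2 L0 + msc b2 L1" and Y0: "Y \<noteq> 0"
    using Y by (auto simp: on_line_def)
  obtain a b where z: "Z = msc a L0 + msc b L1" using assms(5) by (auto simp: in_pencil_def)
  define D where "D = a1*b2 - a2*b1"
  have D0: "D \<noteq> 0"
  proof
    assume D: "D = 0"
    have e: "msc b2 X + msc (- b1) Y = 0" "msc a2 X + msc (- a1) Y = 0"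
      using D unfolding x y D_def by (simp_all add: vec_eq_iff algebra_simps)
    have "b1 = 0" "a1 = 0"
      using not_mproportional_imp_independent[OF X0 Y0 XY e(1)]
        not_mproportional_imp_independent[OF X0 Y0 XY e(2)] by simp_all
    then show False using x X0 by (simp add: vec_eq_iff)
  qed
  \<comment> \<open>Cramer's rule for the coordinates of \<open>Z\<close>\<close>
  have "\<forall>i j. Z$i$j = ((a*b2 - b*a2) * X$i$j + (b*a1 - a*b1) * Y$i$j) / D"
    using D0 unfolding x y z by (simp add: eq_divide_eq D_def algebra_simps)
  then have "Z = msc ((a*b2 - b*a2) / D) X + msc ((b*a1 - a*b1) / D) Y"
    by (simp add: vec_eq_iff add_divide_distrib)
  then show ?thesis by blast
qed

lemma on_line_normalize:
  assumes "mat_lin_indep L0 L1"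
    and "on_line L0 L1 X" "on_line L0 L1 Y" "\<not> mproportional X Y"
    and Z: "on_line L0 L1 Z" "\<not> mproportional Z Y"
  obtains \<alpha> l where "\<alpha> \<noteq> 0" "Z = msc \<alpha> (X + msc l Y)"
proof -
  have "in_pencil L0 L1 Z" using Z(1) by (simp add: on_line_iff_in_pencil)
  then obtain \<alpha> \<beta> where Z_eq: "Z = msc \<alpha> X + msc \<beta> Y"
    using in_pencil_span_members[OF assms(1-4)] by blast
  have "\<alpha> \<noteq> 0"
  proof
    assume "\<alpha> = 0"
    then have "Z = msc \<beta> Y" using Z_eq by (simp add: vec_eq_iff)
    moreover then have "\<beta> \<noteq> 0" using Z(1) by (auto simp: on_line_def msc_eq_0_iff)
    ultimately show False using Z(2) unfolding mproportional_def by blast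
  qed
  moreover have "Z = msc \<alpha> (X + msc (\<beta> / \<alpha>) Y)"
    using Z_eq calculation by (simp add: vec_eq_iff algebra_simps)
  ultimately show ?thesis by (rule that)
qed

lemma finite_mproportional_pencil:
  assumes "X \<noteq> 0" "Y \<noteq> 0" "\<not> mproportional X Y"
  shows "finite {l. mproportional (X + msc l Y) Z}"
proof -
  have unique: "l = l'"
    if l: "mproportional (X + msc l Y) Z" and l': "mproportional (X + msc l' Y) Z" for l l'
  proof -
    obtain c d where cd: "X + msc l Y = msc c Z" "X + msc l' Y = msc d Z" "d \<noteq> 0"
      using l l' by (auto simp: mproportional_def)
    then have "X + msc l Y = msc (c / d) (X + msc l' Y)"
      by (simp add: msc_msc)
    then have "msc (1 - c/d) X + msc (l - (c/d) * l') Y = 0"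
      by (simp add: vec_eq_iff algebra_simps)
    then have "1 - c/d = 0 \<and> l - (c/d) * l' = 0"
      by (rule not_mproportional_imp_independent[OF assms])
    then show "l = l'" by simp
  qed
  show ?thesis
  proof (cases "{l. mproportional (X + msc l Y) Z} = {}")
    case False
    then obtain l where "mproportional (X + msc l Y) Z" by blast
    then have "{l. mproportional (X + msc l Y) Z} \<subseteq> {l}" using unique by blast
    then show ?thesis using finite_subset by blast
  qed simp
qed

lemma finite_cross_rows_pencil_eq_0:
  fixes X Y :: "complex^3^3"
  assumes "cross (row a Y) (row b Y) \<noteq> 0"
  shows "finite {l. cross (row a (X + msc l Y)) (row b (X + msc l Y)) = 0}"
proof -
  obtain i where i: "cross (row a Y) (row b Y) $ i \<noteq> 0"
    using assms by (metis vec_eq_iff zero_index)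
  define q where "q = [:cross (row a X) (row b X) $ i,
    (cross (row a X) (row b Y) + cross (row a Y) (row b X)) $ i, cross (row a Y) (row b Y) $ i:]"
  have "cross (row a (X + msc l Y)) (row b (X + msc l Y)) $ i = poly q l" for l
    using exhaust_3[of i] by (elim disjE) (simp_all add: q_def row_def algebra_simps)
  moreover have "q \<noteq> 0" using i by (simp add: q_def)
  ultimately have "finite {l. cross (row a (X + msc l Y)) (row b (X + msc l Y)) $ i = 0}"
    using poly_roots_finite by simp
  then show ?thesis by (rule rev_finite_subset) auto
qed

section \<open>Generic lines\<close>

lemma
  assumes "generic_line_with L0 L1 F"
  shows generic_line_indep: "mat_lin_indep L0 L1"
    and generic_line_member: "j \<in> {1,2,3} \<Longrightarrow> on_line L0 L1 (F j)"
    and generic_line_rank: "j \<in> {1,2,3} \<Longrightarrow> rank (F j) = 2"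
    and generic_line_distinct:
      "j \<in> {1,2,3} \<Longrightarrow> k \<in> {1,2,3} \<Longrightarrow> j \<noteq> k \<Longrightarrow> \<not> mproportional (F j) (F k)"
    and generic_line_rank_2_member:
      "on_line L0 L1 M \<Longrightarrow> rank M = 2 \<Longrightarrow> \<exists>j\<in>{1,2,3}. mproportional M (F j)"
  using assms unfolding generic_line_with_def by blast+

lemma generic_line_det:
  "generic_line_with L0 L1 F \<Longrightarrow> j \<in> {1,2,3} \<Longrightarrow> det (F j) = 0"
  using generic_line_rank rank_eq_2_iff by blast

lemma generic_line_nonzero:
  "generic_line_with L0 L1 F \<Longrightarrow> j \<in> {1,2,3} \<Longrightarrow> F j \<noteq> 0"
  using generic_line_member by (simp add: on_line_def)

lemma other_two_indices:
  assumes "j \<in> {1,2,3::nat}"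
  obtains k l where "k \<in> {1,2,3}" "l \<in> {1,2,3}" "k \<noteq> j" "l \<noteq> j" "k \<noteq> l"
proof -
  from assms consider "j = 1" | "j = 2" | "j = 3" by blast
  then show thesis
  proof cases
    case 1
    show thesis by (rule that[of 2 3]) (simp_all add: 1)
  next
    case 2
    show thesis by (rule that[of 1 3]) (simp_all add: 2)
  next
    case 3
    show thesis by (rule that[of 1 2]) (simp_all add: 3)
  qed
qed

lemma generic_line_regular_member:
  assumes G: "generic_line_with L0 L1 F"
  obtains Z where "on_line L0 L1 Z" "det Z \<noteq> 0"
proof -
  have F1: "F 1 \<noteq> 0" "on_line L0 L1 (F 1)" and F2: "F 2 \<noteq> 0" "on_line L0 L1 (F 2)"
    and F21: "\<not> mproportional (F 2) (F 1)"
    using generic_line_nonzero[OF G] generic_line_member[OF G] generic_line_distinct[OF G]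
    by auto
  have "rank (F 1) = 2" using generic_line_rank[OF G] by simp
  then obtain a b where ab: "cross (row a (F 1)) (row b (F 1)) \<noteq> 0"
    by (auto simp: rank_eq_2_iff)
  let ?Z = "\<lambda>l. F 2 + msc l (F 1)"
  \<comment> \<open>for all but finitely many \<open>l\<close>, \<open>?Z l\<close> has rank at least two and is proportional to no \<open>F k\<close>\<close>
  have "finite ({0} \<union> {l. mproportional (?Z l) (F 3)}
      \<union> {l. cross (row a (?Z l)) (row b (?Z l)) = 0})"
    using finite_mproportional_pencil[OF F2(1) F1(1) F21] finite_cross_rows_pencil_eq_0[OF ab]
    by simp
  then have "\<exists>l. l \<notin> {0} \<union> {l. mproportional (?Z l) (F 3)}
      \<union> {l. cross (row a (?Z l)) (row b (?Z l)) = 0}"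
    by (rule ex_new_if_finite[OF infinite_UNIV_char_0])
  then obtain l where l: "l \<noteq> 0" "\<not> mproportional (?Z l) (F 3)"
    "cross (row a (?Z l)) (row b (?Z l)) \<noteq> 0"
    by blast
  have "?Z l \<noteq> 0"
  proof
    assume "?Z l = 0"
    then have "row a (?Z l) = 0" by (simp add: row_def vec_eq_iff)
    then show False using l(3) by (simp add: vec3_eq_0_iff)
  qed
  moreover have "in_pencil L0 L1 (msc 1 (F 2) + msc l (F 1))"
    using F1(2) F2(2) by (intro in_pencil_combination) (auto simp: on_line_iff_in_pencil)
  ultimately have on: "on_line L0 L1 (?Z l)" by (simp add: on_line_iff_in_pencil)
  show ?thesis
  proof (rule that[OF on], rule notI)
    assume "det (?Z l) = 0"
    then have "rank (?Z l) = 2" using rank_eq_2_iff l(3) by blast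
    then obtain k c where k: "k \<in> {1,2,3}" "?Z l = msc c (F k)" "c \<noteq> 0"
      using generic_line_rank_2_member[OF G on] by (auto simp: mproportional_def)
    then consider "k = 1" | "k = 2" | "k = 3" by blast
    then show False
    proof cases
      case 1
      then have "msc 1 (F 2) + msc (l - c) (F 1) = 0"
        using k(2) by (simp add: vec_eq_iff algebra_simps)
      from not_mproportional_imp_independent[OF F2(1) F1(1) F21 this] show False by simp
    next
      case 2
      then have "msc (1 - c) (F 2) + msc l (F 1) = 0"
        using k(2) by (simp add: vec_eq_iff algebra_simps)
      from not_mproportional_imp_independent[OF F2(1) F1(1) F21 this] show False using l(1) by simp
    next
      case 3
      then show False using k(2,3) l(2) unfolding mproportional_def by blast
    qed
  qed
qed

lemma generic_line_singular_parameters: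
  assumes G: "generic_line_with L0 L1 F"
  obtains \<alpha>3 l3 where "\<alpha>3 \<noteq> 0" "F 3 = msc \<alpha>3 (F 2 + msc l3 (F 1))"
    and "\<And>l. det (F 2 + msc l (F 1)) = 0 \<Longrightarrow> l = 0 \<or> l = l3"
proof -
  have F: "on_line L0 L1 (F 1)" "on_line L0 L1 (F 2)" "on_line L0 L1 (F 3)"
    "\<not> mproportional (F 2) (F 1)" "\<not> mproportional (F 3) (F 1)" "\<not> mproportional (F 3) (F 2)"
    "det (F 1) = 0" "det (F 2) = 0" "det (F 3) = 0"
    using generic_line_member[OF G] generic_line_distinct[OF G] generic_line_det[OF G] by auto
  note normalize = on_line_normalize[OF generic_line_indep[OF G] F(2,1,4)]
  obtain s t where st: "\<And>l. det (F 2 + msc l (F 1)) = l * (s + l * t)"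
    using det_pencil_singular_ends[OF F(8,7)] by blast
  obtain \<alpha>3 l3 where F3_eq: "\<alpha>3 \<noteq> 0" "F 3 = msc \<alpha>3 (F 2 + msc l3 (F 1))"
    using normalize[OF F(3,5)] by auto
  obtain Z where Z: "on_line L0 L1 Z" "det Z \<noteq> 0"
    using generic_line_regular_member[OF G] .
  have "\<not> mproportional Z (F 1)"
    using Z(2) F(7) unfolding mproportional_def by (metis det_msc mult_zero_right)
  then obtain \<alpha>0 l0 where "\<alpha>0 \<noteq> 0" "Z = msc \<alpha>0 (F 2 + msc l0 (F 1))"
    using normalize[OF Z(1)] by auto
  then have l0: "l0 * (s + l0 * t) \<noteq> 0" using Z(2) st by (simp add: det_msc)
  have "l3 \<noteq> 0"
  proof
    assume "l3 = 0"
    then have "F 3 = msc \<alpha>3 (F 2)" using F3_eq(2) by simp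
    then show False using F3_eq(1) F(6) unfolding mproportional_def by blast
  qed
  moreover have "l3 * (s + l3 * t) = 0"
    using F3_eq F(9) st by (simp add: det_msc)
  ultimately have l3: "s + l3 * t = 0" by simp
  with l0 have "t \<noteq> 0" by auto
  have "l = 0 \<or> l = l3" if "det (F 2 + msc l (F 1)) = 0" for l
  proof (cases "l = 0")
    case False
    with that st have "s + l * t = s + l3 * t" using l3 by simp
    with \<open>t \<noteq> 0\<close> show ?thesis by simp
  qed simp
  with F3_eq show thesis by (rule that)
qed

lemma generic_line_singular_member:
  assumes G: "generic_line_with L0 L1 F" and X: "on_line L0 L1 X" and "det X = 0"
  shows "\<exists>k\<in>{1,2,3}. mproportional X (F k)"
proof (cases "mproportional X (F 1)")
  case True
  then show ?thesis by blast
next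
  case False
  obtain \<alpha>3 l3 where F3_eq: "\<alpha>3 \<noteq> 0" "F 3 = msc \<alpha>3 (F 2 + msc l3 (F 1))"
    and roots: "\<And>l. det (F 2 + msc l (F 1)) = 0 \<Longrightarrow> l = 0 \<or> l = l3"
    using generic_line_singular_parameters[OF G] by blast
  have F: "on_line L0 L1 (F 2)" "on_line L0 L1 (F 1)" "\<not> mproportional (F 2) (F 1)"
    using generic_line_member[OF G] generic_line_distinct[OF G] by auto
  obtain \<alpha> l where X_eq: "\<alpha> \<noteq> 0" "X = msc \<alpha> (F 2 + msc l (F 1))"
    using on_line_normalize[OF generic_line_indep[OF G] F X False] by blast
  then have "det (F 2 + msc l (F 1)) = 0" using assms(3) by (simp add: det_msc)
  with roots consider "l = 0" | "l = l3" by blast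
  then show ?thesis
  proof cases
    case 1
    then have "X = msc \<alpha> (F 2)" using X_eq by simp
    then show ?thesis using X_eq(1) unfolding mproportional_def by blast
  next
    case 2
    then have "X = msc (\<alpha> / \<alpha>3) (F 3)" using X_eq F3_eq by (simp add: msc_msc)
    moreover have "\<alpha> / \<alpha>3 \<noteq> 0" using X_eq(1) F3_eq(1) by simp
    ultimately show ?thesis unfolding mproportional_def by blast
  qed
qed

lemma generic_line_pencil_roots:
  assumes G: "generic_line_with L0 L1 F" and j: "j \<in> {1,2,3}"
    and M: "on_line L0 L1 M" "\<not> mproportional M (F j)"
  obtains l1 l2 l0 where "l1 \<noteq> l2" "det (M + msc l1 (F j)) = 0" "det (M + msc l2 (F j)) = 0"
    "det (M + msc l0 (F j)) \<noteq> 0"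
proof -
  note normalize = on_line_normalize[OF generic_line_indep[OF G] M(1)
      generic_line_member[OF G j] M(2)]
  obtain k l where kl: "k \<in> {1,2,3}" "l \<in> {1,2,3}" "k \<noteq> j" "l \<noteq> j" "k \<noteq> l"
    using other_two_indices[OF j] .
  obtain \<alpha>k l1 where k1: "\<alpha>k \<noteq> 0" "F k = msc \<alpha>k (M + msc l1 (F j))"
    using normalize[OF generic_line_member[OF G kl(1)] generic_line_distinct[OF G kl(1) j kl(3)]] .
  obtain \<alpha>l l2 where l2: "\<alpha>l \<noteq> 0" "F l = msc \<alpha>l (M + msc l2 (F j))"
    using normalize[OF generic_line_member[OF G kl(2)] generic_line_distinct[OF G kl(2) j kl(4)]] .
  have "l1 \<noteq> l2"
  proof
    assume "l1 = l2"
    then have "F k = msc (\<alpha>k / \<alpha>l) (F l)" using k1 l2 by (simp add: msc_msc)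
    moreover have "\<alpha>k / \<alpha>l \<noteq> 0" using k1(1) l2(1) by simp
    ultimately show False
      using generic_line_distinct[OF G kl(1,2,5)] unfolding mproportional_def by blast
  qed
  moreover have "det (M + msc l1 (F j)) = 0" "det (M + msc l2 (F j)) = 0"
    using generic_line_det[OF G kl(1)] generic_line_det[OF G kl(2)] k1 l2 by (simp_all add: det_msc)
  moreover obtain Z where Z: "on_line L0 L1 Z" "det Z \<noteq> 0"
    using generic_line_regular_member[OF G] .
  have "\<not> mproportional Z (F j)"
    using Z(2) generic_line_det[OF G j] unfolding mproportional_def by (metis det_msc mult_zero_right)
  then obtain \<alpha>0 l0 where "\<alpha>0 \<noteq> 0" "Z = msc \<alpha>0 (M + msc l0 (F j))"
    using normalize[OF Z(1)] by auto
  then have "det (M + msc l0 (F j)) \<noteq> 0" using Z(2) by (simp add: det_msc)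
  ultimately show ?thesis by (rule that)
qed

lemma transpose_add: "transpose (A + B) = transpose A + transpose B"
  by (simp add: vec_eq_iff transpose_def)

lemma transpose_eq_0_iff [simp]: "transpose A = 0 \<longleftrightarrow> A = 0"
  by (simp add: vec_eq_iff transpose_def) blast

lemma transpose_pencil: "transpose (msc a L0 + msc b L1) = msc a (transpose L0) + msc b (transpose L1)"
  by (simp add: transpose_add transpose_msc)

lemma mproportional_transpose:
  "mproportional (transpose X) (transpose Y) \<longleftrightarrow> mproportional X (Y::complex^3^3)"
  unfolding mproportional_def transpose_msc[symmetric] transpose_iff ..

lemma on_line_transpose:
  "on_line (transpose L0) (transpose L1) (transpose X) \<longleftrightarrow> on_line L0 L1 X"
  unfolding on_line_def transpose_pencil[symmetric] transpose_iff transpose_eq_0_iff ..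

lemma generic_line_transpose:
  assumes G: "generic_line_with L0 L1 F"
  shows "generic_line_with (transpose L0) (transpose L1) (\<lambda>j. transpose (F j))"
  unfolding generic_line_with_def
proof (intro conjI ballI allI impI)
  show "mat_lin_indep (transpose L0) (transpose L1)"
    using generic_line_indep[OF G]
    unfolding mat_lin_indep_def transpose_pencil[symmetric] transpose_eq_0_iff .
next
  fix j :: nat assume "j \<in> {1,2,3}"
  then show "on_line (transpose L0) (transpose L1) (transpose (F j))"
    and "rank (transpose (F j)) = 2"
    using generic_line_member[OF G] generic_line_rank[OF G] on_line_transpose rank_eq_2_transpose
    by blast+
next
  fix j k :: nat assume "j \<in> {1,2,3}" "k \<in> {1,2,3}" "j \<noteq> k"
  then show "\<not> mproportional (transpose (F j)) (transpose (F k))"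
    using generic_line_distinct[OF G] mproportional_transpose by blast
next
  fix M assume M: "on_line (transpose L0) (transpose L1) M \<and> rank M = 2"
  then have "on_line L0 L1 (transpose M)" "rank (transpose M) = 2"
    using on_line_transpose[of L0 L1 "transpose M"] rank_eq_2_transpose by auto
  then obtain j where "j \<in> {1,2,3}" "mproportional (transpose M) (F j)"
    using generic_line_rank_2_member[OF G] by blast
  then show "\<exists>j\<in>{1,2,3}. mproportional M (transpose (F j))"
    using mproportional_transpose[of "transpose M" "F j"] by auto
qed

section \<open>The Cremona map of a pencil\<close>

definition cross_map :: "'a::comm_ring_1^3^3 \<Rightarrow> 'a^3^3 \<Rightarrow> 'a^3 \<Rightarrow> 'a^3" where
  "cross_map L0 L1 x = cross (L0 *v x) (L1 *v x)"

lemma quadratic_map_cross_map: "quadratic_map (cross_map L0 L1)"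
  unfolding quadratic_map_def
proof
  let ?S = "\<chi> i a b. (if i = 1 then L0$2$a * L1$3$b - L0$3$a * L1$2$b
    else if i = 2 then L0$3$a * L1$1$b - L0$1$a * L1$3$b else L0$1$a * L1$2$b - L0$2$a * L1$1$b)"
  show "\<forall>x. cross_map L0 L1 x = (\<chi> i. \<Sum>a\<in>UNIV. \<Sum>b\<in>UNIV. ?S$i$a$b * x$a * x$b)"
    by (simp add: vec3_eq_iff cross_map_def sum_3 matrix_vector_mult_def algebra_simps)
qed

lemma cross_map_0 [simp]: "cross_map L0 L1 0 = 0"
  by (simp add: cross_map_def)

lemma cross_map_transpose_comp:
  fixes L0 L1 :: "'a::field^3^3"
  shows "\<exists>c. cross_map (transpose L0) (transpose L1) (cross_map L0 L1 x) = c *s x"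
proof -
  define y where "y = cross_map L0 L1 x"
  have g: "cross_map (transpose L0) (transpose L1) y = cross (y v* L0) (y v* L1)"
    by (simp add: cross_map_def)
  \<comment> \<open>\<open>y\<close> is orthogonal to \<open>L0 x\<close> and \<open>L1 x\<close>, i.e. \<open>x\<close> is orthogonal to \<open>y L0\<close> and \<open>y L1\<close>\<close>
  have "dot (y v* L0) x = 0" "dot (y v* L1) x = 0"
    unfolding y_def cross_map_def dot_matrix_vector_mult[symmetric]
    by (simp_all add: dot_cross_left dot_cross_right)
  show ?thesis
  proof (cases "cross (y v* L0) (y v* L1) = 0")
    case True
    then show ?thesis unfolding y_def[symmetric] g by (intro exI[of _ 0]) simp
  next
    case False
    then obtain \<mu> where \<mu>: "x = \<mu> *s cross (y v* L0) (y v* L1)"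
      using orthogonal_two_imp_parallel_cross \<open>dot (y v* L0) x = 0\<close> \<open>dot (y v* L1) x = 0\<close>
      by blast
    have "\<mu> \<noteq> 0"
    proof
      assume "\<mu> = 0"
      then have "y = 0" using \<mu> by (simp add: y_def)
      then show False using False by simp
    qed
    then have "cross (y v* L0) (y v* L1) = (1 / \<mu>) *s x" using \<mu> by simp
    then show ?thesis unfolding y_def[symmetric] g by blast
  qed
qed

lemma cross_map_eq_0_iff:
  "cross_map L0 L1 x = 0 \<longleftrightarrow> (\<exists>s t. (s \<noteq> 0 \<or> t \<noteq> 0) \<and> (msc s L0 + msc t L1) *v x = 0)"
  by (simp add: cross_map_def cross_eq_0_iff_dependent pencil_matrix_vector_mult)

lemma base_points_cross_map:
  assumes G: "generic_line_with L0 L1 F"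
    and ker: "\<forall>j\<in>{1,2,3}. ex j \<noteq> 0 \<and> F j *v ex j = 0"
  shows "base_points (cross_map L0 L1) = {x. \<exists>j\<in>{1,2,3}. proportional x (ex j)}"
proof (intro set_eqI iffI)
  fix x
  assume "x \<in> base_points (cross_map L0 L1)"
  then obtain s t where x: "x \<noteq> 0" and st: "s \<noteq> 0 \<or> t \<noteq> 0" "(msc s L0 + msc t L1) *v x = 0"
    by (auto simp: base_points_def cross_map_eq_0_iff)
  define M where "M = msc s L0 + msc t L1"
  have "on_line L0 L1 M"
    using generic_line_indep[OF G] st(1) unfolding mat_lin_indep_def on_line_def M_def by blast
  moreover have "det M = 0" using det_eq_0_iff_ker x st(2) M_def by blast
  ultimately obtain k where "k \<in> {1,2,3}" "mproportional M (F k)"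
    using generic_line_singular_member[OF G] by blast
  then obtain c where k: "k \<in> {1,2,3}" "M = msc c (F k)" "c \<noteq> 0"
    by (auto simp: mproportional_def)
  then have "F k *v x = 0" using st(2) by (simp add: M_def[symmetric] msc_matrix_vector_mult)
  then obtain \<mu> where \<mu>: "x = \<mu> *s ex k"
    using rank_2_ker_parallel generic_line_rank[OF G k(1)] ker k(1) by blast
  with x have "\<mu> \<noteq> 0" by auto
  with \<mu> k(1) show "x \<in> {x. \<exists>j\<in>{1,2,3}. proportional x (ex j)}"
    by (auto simp: proportional_def)
next
  fix x
  assume "x \<in> {x. \<exists>j\<in>{1,2,3}. proportional x (ex j)}"
  then obtain k c where k: "k \<in> {1,2,3}" "x = c *s ex k" "c \<noteq> 0"
    by (auto simp: proportional_def)
  then have "x \<noteq> 0" "F k *v x = 0"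
    using ker by (auto simp: vector_scalar_commute)
  moreover obtain a b where ab: "F k = msc a L0 + msc b L1"
    using generic_line_member[OF G k(1)] by (auto simp: on_line_def)
  moreover have "a \<noteq> 0 \<or> b \<noteq> 0"
    using generic_line_nonzero[OF G k(1)] ab by auto
  ultimately show "x \<in> base_points (cross_map L0 L1)"
    by (auto simp: base_points_def cross_map_eq_0_iff)
qed

lemma three_distinct_points_kernels:
  assumes G: "generic_line_with L0 L1 F"
    and ker: "\<forall>j\<in>{1,2,3}. ex j \<noteq> 0 \<and> F j *v ex j = 0"
  shows "three_distinct_points {x. \<exists>j\<in>{1,2,3}. proportional x (ex j)}"
proof -
  obtain Z where Z: "on_line L0 L1 Z" "det Z \<noteq> 0"
    using generic_line_regular_member[OF G] .
  then have Z_pencil: "in_pencil L0 L1 Z" by (simp add: on_line_iff_in_pencil)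
  have distinct: "\<not> proportional (ex k) (ex l)"
    if kl: "k \<in> {1,2,3}" "l \<in> {1,2,3}" "k \<noteq> l" for k l
  proof
    assume "proportional (ex k) (ex l)"
    then obtain c where "c \<noteq> 0" "ex k = c *s ex l" by (auto simp: proportional_def)
    then have "F k *v ex l = 0" "F l *v ex l = 0"
      using ker kl by (auto simp: vector_scalar_commute)
    moreover obtain \<alpha> \<beta> where "Z = msc \<alpha> (F k) + msc \<beta> (F l)"
      using in_pencil_span_members[OF generic_line_indep[OF G] generic_line_member[OF G kl(1)]
          generic_line_member[OF G kl(2)] generic_line_distinct[OF G kl] Z_pencil]
      by blast
    ultimately have "Z *v ex l = 0" by (simp add: pencil_matrix_vector_mult)
    then show False using Z(2) det_eq_0_iff_ker ker kl(2) by blast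
  qed
  show ?thesis
    unfolding three_distinct_points_def
    using ker distinct[of 1 2] distinct[of 1 3] distinct[of 2 3]
    by (intro exI[of _ "ex 1"] exI[of _ "ex 2"] exI[of _ "ex 3"]) auto
qed

lemma ex_not_orthogonal_finite:
  fixes W :: "('a::field_char_0^3) set"
  assumes "finite W" "0 \<notin> W"
  shows "\<exists>x. \<forall>w\<in>W. dot w x \<noteq> 0"
proof -
  \<comment> \<open>search \<open>x\<close> on the moment curve \<open>(1, t, t^2)\<close>, where \<open>dot w x\<close> is a nonzero polynomial in \<open>t\<close>\<close>
  define q where "q w = [:w$1, w$2, w$3:]" for w :: "'a^3"
  have "q w \<noteq> 0" if "w \<in> W" for w
  proof -
    have "w \<noteq> 0" using that assms(2) by blast
    then show ?thesis by (auto simp: q_def vec3_eq_0_iff)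
  qed
  then have "finite (\<Union>w\<in>W. {t. poly (q w) t = 0})"
    using assms(1) poly_roots_finite by blast
  then obtain t where t: "\<And>w. w \<in> W \<Longrightarrow> poly (q w) t \<noteq> 0"
    using ex_new_if_finite[OF infinite_UNIV_char_0] by blast
  have "dot w (vector [1, t, t^2]) = poly (q w) t" for w
    by (simp add: q_def dot_3 algebra_simps power2_eq_square)
  then show ?thesis using t by metis
qed

lemma cross_map_comp_eq_0_imp:
  assumes G: "generic_line_with L0 L1 F"
    and kerx: "\<forall>j\<in>{1,2,3}. ex j \<noteq> 0 \<and> F j *v ex j = 0"
    and kery: "\<forall>j\<in>{1,2,3}. ey j \<noteq> 0 \<and> ey j v* F j = 0"
    and Z: "in_pencil L0 L1 Z"
    and x: "cross_map (transpose L0) (transpose L1) (cross_map L0 L1 x) = 0"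
  shows "\<exists>l\<in>{1,2,3}. dot (ey l v* Z) x = 0"
proof -
  define y where "y = cross_map L0 L1 x"
  consider "x = 0" | "x \<noteq> 0" "y = 0" | "y \<noteq> 0" by blast
  then show ?thesis
  proof cases
    case 1
    then show ?thesis by auto
  next
    case 2
    \<comment> \<open>\<open>x\<close> is a multiple of some \<open>ex k\<close>, and for \<open>l \<noteq> k\<close> the vector \<open>Z ex k\<close> lies in the
      image of \<open>F l\<close>, which \<open>ey l\<close> annihilates\<close>
    then have "x \<in> base_points (cross_map L0 L1)" by (simp add: base_points_def y_def)
    then obtain k c where k: "k \<in> {1,2,3}" "x = c *s ex k"
      unfolding base_points_cross_map[OF G kerx] by (auto simp: proportional_def)
    obtain l where l: "l \<in> {1,2,3}" "l \<noteq> k" using other_two_indices[OF k(1)] by metis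
    obtain \<alpha> \<beta> where "Z = msc \<alpha> (F l) + msc \<beta> (F k)"
      using in_pencil_span_members[OF generic_line_indep[OF G] generic_line_member[OF G l(1)]
          generic_line_member[OF G k(1)] generic_line_distinct[OF G l(1) k(1) l(2)] Z] by blast
    then have "Z *v ex k = \<alpha> *s (F l *v ex k)"
      using bspec[OF kerx k(1)] by (simp add: pencil_matrix_vector_mult)
    then have "dot (ey l v* Z) (ex k) = \<alpha> * dot (ey l v* F l) (ex k)"
      by (simp add: dot_matrix_vector_mult[symmetric] dot_scale_right)
    then show ?thesis using kery l(1) k(2) by (auto simp: dot_scale_right)
  next
    case 3
    \<comment> \<open>\<open>y\<close> is a multiple of some \<open>ey l\<close>, and it is orthogonal to \<open>L x\<close> for every \<open>L\<close> in the pencil\<close>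
    have "y \<in> base_points (cross_map (transpose L0) (transpose L1))"
      using 3 x by (simp add: base_points_def y_def)
    then obtain l c where l: "l \<in> {1,2,3}" "y = c *s ey l" "c \<noteq> 0"
      using base_points_cross_map[OF generic_line_transpose[OF G], of ey] kery
      by (auto simp: proportional_def)
    have "dot y (L0 *v x) = 0" "dot y (L1 *v x) = 0"
      unfolding y_def cross_map_def by (simp_all add: dot_cross_left dot_cross_right)
    then have "dot (ey l) (L0 *v x) = 0" "dot (ey l) (L1 *v x) = 0"
      using l by (simp_all add: dot_scale_left)
    moreover obtain a b where "Z = msc a L0 + msc b L1" using Z by (auto simp: in_pencil_def)
    ultimately have "dot (ey l v* Z) x = 0"
      by (simp add: dot_matrix_vector_mult[symmetric] pencil_matrix_vector_mult dot_linear)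
    then show ?thesis using l(1) by blast
  qed
qed

lemma cross_map_comp_nonzero:
  assumes G: "generic_line_with L0 L1 F"
    and kerx: "\<forall>j\<in>{1,2,3}. ex j \<noteq> 0 \<and> F j *v ex j = 0"
    and kery: "\<forall>j\<in>{1,2,3}. ey j \<noteq> 0 \<and> ey j v* F j = 0"
  shows "\<exists>x. cross_map (transpose L0) (transpose L1) (cross_map L0 L1 x) \<noteq> 0"
proof -
  obtain Z where Z: "on_line L0 L1 Z" "det Z \<noteq> 0"
    using generic_line_regular_member[OF G] .
  have "ey l v* Z \<noteq> 0" if "l \<in> {1,2,3}" for l
    using Z(2) kery that det_eq_0_iff_ker[of "transpose Z"] by (auto simp: det_transpose)
  then obtain x where "\<forall>l\<in>{1,2,3}. dot (ey l v* Z) x \<noteq> 0"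
    using ex_not_orthogonal_finite[of "(\<lambda>l. ey l v* Z) ` {1,2,3}"] by auto
  then show ?thesis
    using cross_map_comp_eq_0_imp[OF G kerx kery] Z(1) by (auto simp: on_line_iff_in_pencil)
qed

lemma quadratic_cremona_cross_map:
  assumes G: "generic_line_with L0 L1 F"
    and kerx: "\<forall>j\<in>{1,2,3}. ex j \<noteq> 0 \<and> F j *v ex j = 0"
    and kery: "\<forall>j\<in>{1,2,3}. ey j \<noteq> 0 \<and> ey j v* F j = 0"
  shows "quadratic_cremona (cross_map L0 L1) (cross_map (transpose L0) (transpose L1))"
proof -
  note G' = generic_line_transpose[OF G]
  have kerx': "\<forall>j\<in>{1,2,3}. ey j \<noteq> 0 \<and> transpose (F j) *v ey j = 0"
    and kery': "\<forall>j\<in>{1,2,3}. ex j \<noteq> 0 \<and> ex j v* transpose (F j) = 0"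
    using kerx kery by (simp_all flip: transpose_matrix_vector)
  show ?thesis
    unfolding quadratic_cremona_def
    using quadratic_map_cross_map cross_map_transpose_comp
      cross_map_transpose_comp[of "transpose L0" "transpose L1"]
      cross_map_comp_nonzero[OF G kerx kery] cross_map_comp_nonzero[OF G' kerx' kery', simplified]
      base_points_cross_map[OF G kerx] base_points_cross_map[OF G' kerx']
      three_distinct_points_kernels[OF G kerx] three_distinct_points_kernels[OF G' kerx']
    by (simp; blast)
qed

section \<open>The quadrics of the line\<close>

lemma bil_eq_dot: "bil x M y = dot x (M *v y)"
  by (simp add: bil_def dot_def matrix_vector_mult_def sum_distrib_left mult.assoc)

lemma bil_add_left: "bil (x + x') M y = bil x M y + bil x' M y"
  and bil_add_right: "bil x M (y + y') = bil x M y + bil x M y'"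
  and bil_scale_left: "bil (c *s x) M y = c * bil x M y"
  and bil_scale_right: "bil x M (c *s y) = c * bil x M y"
  and bil_add_matrix: "bil x (A + B) y = bil x A y + bil x B y"
  and bil_msc: "bil x (msc c A) y = c * bil x A y"
  by (simp_all add: bil_eq_dot dot_linear matrix_vector_right_distrib vector_scalar_commute
      matrix_vector_mult_add_rdistrib msc_matrix_vector_mult)

lemma bil_0_left [simp]: "bil 0 M y = 0"
  and bil_0_right [simp]: "bil x M 0 = 0"
  by (simp_all add: bil_eq_dot)

lemmas bil_linear = bil_add_left bil_add_right bil_scale_left bil_scale_right

lemma vector_matrix_mult_transpose: "x v* transpose A = A *v (x::'a::comm_semiring_1^'n)"
  using transpose_matrix_vector[of "transpose A" x] by simp

lemma bil_transpose_mult: "bil p (transpose A2 ** M ** A1) q = bil (A2 *v p) M (A1 *v q)"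
proof -
  have "bil p (transpose A2 ** M ** A1) q = dot p (transpose A2 *v (M *v (A1 *v q)))"
    by (simp only: bil_eq_dot matrix_vector_mul_assoc[symmetric])
  also have "\<dots> = bil (A2 *v p) M (A1 *v q)"
    by (simp only: dot_matrix_vector_mult vector_matrix_mult_transpose bil_eq_dot)
  finally show ?thesis .
qed

lemma qf_quad_of: "qf (quad_of A1 A2 M) p = bil (A2 *v p) M (A1 *v p)"
  by (simp add: qf_def quad_of_def bil_transpose_mult)

lemma dot_gradient: "dot v ((N + transpose N) *v p) = bil v N p + bil p N v"
proof -
  have "dot v (transpose N *v p) = dot p (N *v v)"
    by (simp only: transpose_matrix_vector dot_commute[of v] dot_matrix_vector_mult)
  then show ?thesis
    by (simp add: matrix_vector_mult_add_rdistrib dot_add_right bil_eq_dot)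
qed

lemma matrix_mult_transpose_nth: "(R2 ** X ** transpose R1) $ i $ k = bil (R2 $ i) X (R1 $ k)"
proof -
  have "(R2 ** X ** transpose R1) $ i $ k = (\<Sum>b\<in>UNIV. \<Sum>a\<in>UNIV. R2$i$a * X$a$b * R1$k$b)"
    by (simp add: matrix_matrix_mult_def transpose_def sum_distrib_right)
  also have "\<dots> = bil (R2 $ i) X (R1 $ k)"
    by (subst sum.swap) (simp add: bil_def)
  finally show ?thesis .
qed

lemma fundamental_matrix_skew:
  assumes "\<forall>p. bil (A2 *v p) F (A1 *v p) = 0"
  shows "bil (A2 *v u) F (A1 *v v) = - bil (A2 *v v) F (A1 *v u)"
  using assms[rule_format, of "u + v"] assms[rule_format, of u] assms[rule_format, of v]
  by (simp add: matrix_vector_right_distrib bil_linear eq_neg_iff_add_eq_0 add.commute)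

lemma extend_to_basis_4:
  fixes c d :: "'a::field^4"
  assumes c: "c \<noteq> 0" and d: "\<not> (\<exists>\<mu>. d = \<mu> *s c)"
  obtains u3 u4 where "\<forall>p. \<exists>a b s t. p = a *s c + b *s d + s *s u3 + t *s u4"
proof -
  have "vec.independent {c}" using c by (simp add: vec.independent_insert)
  moreover have "d \<notin> vec.span {c}" using d by (auto simp: vec.span_singleton)
  ultimately have "vec.independent {d, c}" by (simp add: vec.independent_insert)
  then obtain B where B: "{d, c} \<subseteq> B" "vec.independent B" "UNIV \<subseteq> vec.span B"
    using vec.maximal_independent_subset_extend[OF subset_UNIV] by metis
  have fin: "finite B" using vec.finiteI_independent[OF B(2)] .
  have "card B = 4"
    using vec.basis_card_eq_dim[of B UNIV] B vec_dim_card[where 'a='a and 'n=4] by simp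
  moreover have "d \<noteq> c" using d by (metis vector_smult_lid)
  ultimately have "card (B - {c, d}) = 2" using B(1) fin by (simp add: card_Diff_subset)
  then obtain u3 u4 where u: "B - {c, d} = {u3, u4}" "u3 \<noteq> u4" by (auto simp: card_2_iff)
  have B_eq: "B = {c, d, u3, u4}" and dist: "c \<noteq> d" "c \<noteq> u3" "c \<noteq> u4" "d \<noteq> u3" "d \<noteq> u4"
    using u B(1) \<open>d \<noteq> c\<close> by blast+
  have "\<exists>a b s t. p = a *s c + b *s d + s *s u3 + t *s u4" for p
  proof -
    obtain w where "p = (\<Sum>v\<in>B. w v *s v)" using B(3) vec.span_finite[OF fin] by auto
    then have "p = w c *s c + w d *s d + w u3 *s u3 + w u4 *s u4"
      using dist u(2) by (simp add: B_eq add.assoc)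
    then show ?thesis by blast
  qed
  then show ?thesis using that by blast
qed

lemma det_images_nonzero:
  fixes A :: "'a::field^4^3"
  assumes "rank A = 3" "A *v c = 0"
    and span: "\<forall>p. \<exists>a b s t. p = a *s c + b *s d + s *s u3 + t *s u4"
  shows "det (vector [A *v d, A *v u3, A *v u4] :: 'a^3^3) \<noteq> 0"
proof
  assume "det (vector [A *v d, A *v u3, A *v u4] :: 'a^3^3) = 0"
  then obtain w where w: "w \<noteq> 0" "(vector [A *v d, A *v u3, A *v u4] :: 'a^3^3) *v w = 0"
    using det_eq_0_iff_ker by blast
  moreover have "((vector [a, b, c] :: 'a^3^3) *v w) $ i = dot (vector [a, b, c] $ i) w"
    for a b c i
    by (simp add: matrix_vector_mult_def dot_def)
  ultimately have orth: "dot w (A *v d) = 0" "dot w (A *v u3) = 0" "dot w (A *v u4) = 0"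
    by (metis dot_commute vector_3 zero_index)+
  have "dot (w v* A) p = 0" for p
  proof -
    obtain a b s t where "p = a *s c + b *s d + s *s u3 + t *s u4" using span by blast
    then show ?thesis using orth assms(2)
      by (simp add: dot_matrix_vector_mult[symmetric] matrix_vector_right_distrib
          vector_scalar_commute dot_linear)
  qed
  then have "w v* A = 0" by (rule orthogonal_all_imp_0)
  then show False using rank_3_imp_left_ker_0[OF assms(1)] w(1) by blast
qed

definition skew_coeff :: "'a::comm_ring_1^3^3 \<Rightarrow> 'a" where
  "skew_coeff N = N$1$1 * (N$2$3 - N$3$2) + N$1$2 * N$3$1 - N$1$3 * N$2$1"

lemma det_add_skew_23:
  fixes N :: "complex^3^3" and f l :: complex
  defines "\<Phi> \<equiv> \<chi> i k. if i = 2 \<and> k = 3 then f else if i = 3 \<and> k = 2 then - f else 0"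
  shows "det (N + msc l \<Phi>) = N$1$1 * f^2 * l^2 + f * skew_coeff N * l + det N"
  by (simp add: \<Phi>_def skew_coeff_def det_3 algebra_simps power2_eq_square)

lemma quadratic_two_roots:
  fixes A B C :: "'a::idom"
  assumes "A*l1^2 + B*l1 + C = 0" "A*l2^2 + B*l2 + C = 0" "l1 \<noteq> l2" "A*l0^2 + B*l0 + C \<noteq> 0"
  shows "A \<noteq> 0 \<and> B^2 - 4*A*C \<noteq> 0"
proof -
  have "(l1 - l2) * (A*(l1 + l2) + B) = (A*l1^2 + B*l1 + C) - (A*l2^2 + B*l2 + C)"
    by (simp add: algebra_simps power2_eq_square)
  then have "A*(l1 + l2) + B = 0" using assms(1-3) by simp
  then have B: "B = - A*(l1 + l2)" by algebra
  then have C: "C = A*l1*l2" using assms(1) by algebra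
  have "A \<noteq> 0" using assms(4) B C by auto
  moreover have "B^2 - 4*A*C = A^2 * (l1 - l2)^2" using B C by algebra
  ultimately show ?thesis using assms(3) by simp
qed

lemma gradient_system_trivial:
  fixes N :: "'a::field^3^3"
  assumes E1: "b * N$1$1 + \<sigma> * N$1$2 + \<tau> * N$1$3 = 0"
    and E2: "a * N$1$1 + \<sigma> * N$2$1 + \<tau> * N$3$1 = 0"
    and E3: "b * N$2$1 + \<sigma> * N$2$2 + \<tau> * N$2$3 + (a * N$1$2 + \<sigma> * N$2$2 + \<tau> * N$3$2) = 0"
    and E4: "b * N$3$1 + \<sigma> * N$3$2 + \<tau> * N$3$3 + (a * N$1$3 + \<sigma> * N$2$3 + \<tau> * N$3$3) = 0"
    and N11: "N$1$1 \<noteq> 0" and disc: "4 * N$1$1 * det N \<noteq> skew_coeff N ^ 2"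
  shows "a = 0 \<and> b = 0 \<and> \<sigma> = 0 \<and> \<tau> = 0"
proof -
  \<comment> \<open>eliminating \<open>a\<close> and \<open>b\<close> leaves a \<open>2\<times>2\<close> system in \<open>\<sigma>, \<tau>\<close> with determinant \<open>P R - Q\<^sup>2\<close>\<close>
  define P where "P = 2 * (N$1$1 * N$2$2 - N$1$2 * N$2$1)"
  define Q where "Q = N$1$1 * (N$2$3 + N$3$2) - N$1$2 * N$3$1 - N$1$3 * N$2$1"
  define R where "R = 2 * (N$1$1 * N$3$3 - N$1$3 * N$3$1)"
  have "P*\<sigma> + Q*\<tau> = N$1$1 * (b * N$2$1 + \<sigma> * N$2$2 + \<tau> * N$2$3 + (a * N$1$2 + \<sigma> * N$2$2 + \<tau> * N$3$2))
      - N$2$1 * (b * N$1$1 + \<sigma> * N$1$2 + \<tau> * N$1$3) - N$1$2 * (a * N$1$1 + \<sigma> * N$2$1 + \<tau> * N$3$1)"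
    by (simp add: P_def Q_def algebra_simps)
  then have G3: "P*\<sigma> + Q*\<tau> = 0" using E1 E2 E3 by simp
  have "Q*\<sigma> + R*\<tau> = N$1$1 * (b * N$3$1 + \<sigma> * N$3$2 + \<tau> * N$3$3 + (a * N$1$3 + \<sigma> * N$2$3 + \<tau> * N$3$3))
      - N$3$1 * (b * N$1$1 + \<sigma> * N$1$2 + \<tau> * N$1$3) - N$1$3 * (a * N$1$1 + \<sigma> * N$2$1 + \<tau> * N$3$1)"
    by (simp add: R_def Q_def algebra_simps)
  then have G4: "Q*\<sigma> + R*\<tau> = 0" using E1 E2 E4 by simp
  have "P*R - Q^2 = 4 * N$1$1 * det N - skew_coeff N ^ 2"
    by (simp add: P_def Q_def R_def skew_coeff_def det_3 algebra_simps power2_eq_square)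
  then have PQR: "P*R - Q^2 \<noteq> 0" using disc by simp
  have "(P*R - Q^2) * \<sigma> = R * (P*\<sigma> + Q*\<tau>) - Q * (Q*\<sigma> + R*\<tau>)"
    by (simp add: algebra_simps power2_eq_square)
  then have \<sigma>: "\<sigma> = 0" using G3 G4 PQR by simp
  have "(P*R - Q^2) * \<tau> = P * (Q*\<sigma> + R*\<tau>) - Q * (P*\<sigma> + Q*\<tau>)"
    by (simp add: algebra_simps power2_eq_square)
  then have \<tau>: "\<tau> = 0" using G3 G4 PQR by simp
  show ?thesis using E1 E2 N11 \<sigma> \<tau> by simp
qed

lemma frame_adapted_to_centres:
  fixes A1 A2 :: "complex^4^3"
  assumes "rank A1 = 3" "rank A2 = 3"
    and c: "c1 \<noteq> 0" "A1 *v c1 = 0" "c2 \<noteq> 0" "A2 *v c2 = 0" "\<not> proportional c1 c2"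
  obtains u3 u4 where "\<forall>p. \<exists>a b \<sigma> \<tau>. p = a *s c1 + b *s c2 + \<sigma> *s u3 + \<tau> *s u4"
    "det (vector [A1 *v c2, A1 *v u3, A1 *v u4] :: complex^3^3) \<noteq> 0"
    "det (vector [A2 *v c1, A2 *v u3, A2 *v u4] :: complex^3^3) \<noteq> 0"
proof -
  have "\<not> (\<exists>\<mu>. c2 = \<mu> *s c1)"
  proof
    assume "\<exists>\<mu>. c2 = \<mu> *s c1"
    then obtain \<mu> where \<mu>: "c2 = \<mu> *s c1" ..
    with c(3) have "\<mu> \<noteq> 0" by auto
    with \<mu> have "c1 = (1 / \<mu>) *s c2" by simp
    with \<open>\<mu> \<noteq> 0\<close> have "proportional c1 c2"
      unfolding proportional_def by (intro exI[of _ "1 / \<mu>"]) simp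
    with c(5) show False by contradiction
  qed
  then obtain u3 u4 where span: "\<forall>p. \<exists>a b \<sigma> \<tau>. p = a *s c1 + b *s c2 + \<sigma> *s u3 + \<tau> *s u4"
    using extend_to_basis_4[OF c(1)] by blast
  have "\<forall>p. \<exists>a b \<sigma> \<tau>. p = a *s c2 + b *s c1 + \<sigma> *s u3 + \<tau> *s u4"
  proof
    fix p
    obtain a b \<sigma> \<tau> where "p = a *s c1 + b *s c2 + \<sigma> *s u3 + \<tau> *s u4" using span by blast
    then have "p = b *s c2 + a *s c1 + \<sigma> *s u3 + \<tau> *s u4" by (simp add: algebra_simps)
    then show "\<exists>a b \<sigma> \<tau>. p = a *s c2 + b *s c1 + \<sigma> *s u3 + \<tau> *s u4" by blast
  qed
  with span show thesis
    using that det_images_nonzero[OF assms(1) c(2) span] det_images_nonzero[OF assms(2) c(4)]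
    by blast
qed

lemma fundamental_matrix_in_frame:
  fixes A1 A2 :: "complex^4^3"
    and c1 c2 u3 u4 :: "complex^4" and F :: "complex^3^3"
  defines "R1 \<equiv> vector [A1 *v c2, A1 *v u3, A1 *v u4] :: complex^3^3"
    and "R2 \<equiv> vector [A2 *v c1, A2 *v u3, A2 *v u4] :: complex^3^3"
    and "\<phi> \<equiv> bil (A2 *v u3) F (A1 *v u4)"
  assumes fund: "\<forall>p. bil (A2 *v p) F (A1 *v p) = 0"
    and c: "A1 *v c1 = 0" "A2 *v c2 = 0"
  shows "R2 ** F ** transpose R1
    = (\<chi> i k. if i = 2 \<and> k = 3 then \<phi> else if i = 3 \<and> k = 2 then - \<phi> else 0)"
  using fundamental_matrix_skew[OF fund, of c1 c2] fundamental_matrix_skew[OF fund, of c1 u3]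
    fundamental_matrix_skew[OF fund, of c1 u4] fundamental_matrix_skew[OF fund, of u3 c2]
    fundamental_matrix_skew[OF fund, of u4 c2] fundamental_matrix_skew[OF fund, of u4 u3]
    fund[rule_format, of u3] fund[rule_format, of u4] c
  by (simp add: R1_def R2_def \<phi>_def vec_eq_iff forall_3 matrix_mult_transpose_nth)

lemma det_pencil_in_frame:
  fixes A1 A2 :: "complex^4^3"
    and c1 c2 u3 u4 :: "complex^4" and F M :: "complex^3^3"
  defines "R1 \<equiv> vector [A1 *v c2, A1 *v u3, A1 *v u4] :: complex^3^3"
    and "R2 \<equiv> vector [A2 *v c1, A2 *v u3, A2 *v u4] :: complex^3^3"
    and "N \<equiv> (vector [A2 *v c1, A2 *v u3, A2 *v u4] :: complex^3^3) ** M
      ** transpose (vector [A1 *v c2, A1 *v u3, A1 *v u4] :: complex^3^3)"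
    and "\<phi> \<equiv> bil (A2 *v u3) F (A1 *v u4)"
  assumes fund: "\<forall>p. bil (A2 *v p) F (A1 *v p) = 0"
    and c: "A1 *v c1 = 0" "A2 *v c2 = 0"
  shows "det R2 * det (M + msc l F) * det R1
    = N$1$1 * \<phi>^2 * l^2 + \<phi> * skew_coeff N * l + det N"
proof -
  have "det R2 * det (M + msc l F) * det R1 = det (R2 ** (M + msc l F) ** transpose R1)"
    by (simp add: det_mul det_transpose)
  also have "R2 ** (M + msc l F) ** transpose R1 = N + msc l (R2 ** F ** transpose R1)"
    by (simp add: vec_eq_iff N_def R1_def R2_def matrix_mult_transpose_nth bil_add_matrix bil_msc)
  also have "R2 ** F ** transpose R1
    = (\<chi> i k. if i = 2 \<and> k = 3 then \<phi> else if i = 3 \<and> k = 2 then - \<phi> else 0)"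
    unfolding R1_def R2_def \<phi>_def by (rule fundamental_matrix_in_frame[OF fund c])
  also have "det (N + msc l \<dots>) = N$1$1 * \<phi>^2 * l^2 + \<phi> * skew_coeff N * l + det N"
    by (rule det_add_skew_23)
  finally show ?thesis .
qed

lemma quadric_smooth_in_frame:
  fixes A1 A2 :: "complex^4^3"
    and c1 c2 u3 u4 :: "complex^4" and M :: "complex^3^3"
  defines "N \<equiv> (vector [A2 *v c1, A2 *v u3, A2 *v u4] :: complex^3^3) ** M
      ** transpose (vector [A1 *v c2, A1 *v u3, A1 *v u4] :: complex^3^3)"
  assumes c: "A1 *v c1 = 0" "A2 *v c2 = 0"
    and span: "\<forall>p. \<exists>a b \<sigma> \<tau>. p = a *s c1 + b *s c2 + \<sigma> *s u3 + \<tau> *s u4"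
    and nondeg: "N$1$1 \<noteq> 0" "4 * N$1$1 * det N \<noteq> skew_coeff N ^ 2"
    and "p \<noteq> 0"
  shows "(quad_of A1 A2 M + transpose (quad_of A1 A2 M)) *v p \<noteq> 0"
proof
  let ?Q = "quad_of A1 A2 M"
  assume "(?Q + transpose ?Q) *v p = 0"
  then have grad: "bil (A2 *v v) M (A1 *v p) + bil (A2 *v p) M (A1 *v v) = 0" for v
    using dot_gradient[of v ?Q p] by (simp add: quad_of_def bil_transpose_mult)
  obtain a b \<sigma> \<tau> where p: "p = a *s c1 + b *s c2 + \<sigma> *s u3 + \<tau> *s u4" using span by blast
  have x: "A1 *v p = b *s (A1 *v c2) + \<sigma> *s (A1 *v u3) + \<tau> *s (A1 *v u4)"
    and y: "A2 *v p = a *s (A2 *v c1) + \<sigma> *s (A2 *v u3) + \<tau> *s (A2 *v u4)"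
    using c by (simp_all add: p matrix_vector_right_distrib vector_scalar_commute)
  have entries:
    "N$1$1 = bil (A2 *v c1) M (A1 *v c2)" "N$1$2 = bil (A2 *v c1) M (A1 *v u3)"
    "N$1$3 = bil (A2 *v c1) M (A1 *v u4)" "N$2$1 = bil (A2 *v u3) M (A1 *v c2)"
    "N$2$2 = bil (A2 *v u3) M (A1 *v u3)" "N$2$3 = bil (A2 *v u3) M (A1 *v u4)"
    "N$3$1 = bil (A2 *v u4) M (A1 *v c2)" "N$3$2 = bil (A2 *v u4) M (A1 *v u3)"
    "N$3$3 = bil (A2 *v u4) M (A1 *v u4)"
    by (simp_all add: N_def matrix_mult_transpose_nth)
  have "b * N$1$1 + \<sigma> * N$1$2 + \<tau> * N$1$3 = 0"
    using grad[of c1] c by (simp add: entries x bil_linear)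
  moreover have "a * N$1$1 + \<sigma> * N$2$1 + \<tau> * N$3$1 = 0"
    using grad[of c2] c by (simp add: entries y bil_linear)
  moreover have "b * N$2$1 + \<sigma> * N$2$2 + \<tau> * N$2$3 + (a * N$1$2 + \<sigma> * N$2$2 + \<tau> * N$3$2) = 0"
    using grad[of u3] by (simp add: entries x y bil_linear)
  moreover have "b * N$3$1 + \<sigma> * N$3$2 + \<tau> * N$3$3 + (a * N$1$3 + \<sigma> * N$2$3 + \<tau> * N$3$3) = 0"
    using grad[of u4] by (simp add: entries x y bil_linear)
  ultimately have "a = 0 \<and> b = 0 \<and> \<sigma> = 0 \<and> \<tau> = 0"
    using gradient_system_trivial nondeg by blast
  then show False using p \<open>p \<noteq> 0\<close> by simp
qed

lemma permissible_quadric_of_pencil: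
  fixes A1 A2 :: "complex^4^3"
  assumes ranks: "rank A1 = 3" "rank A2 = 3"
    and c: "c1 \<noteq> 0" "A1 *v c1 = 0" "c2 \<noteq> 0" "A2 *v c2 = 0" "\<not> proportional c1 c2"
    and fund: "\<forall>p. bil (A2 *v p) F (A1 *v p) = 0"
    and roots: "l1 \<noteq> l2" "det (M + msc l1 F) = 0" "det (M + msc l2 F) = 0"
      "det (M + msc l0 F) \<noteq> 0"
  shows "permissible_quadric (quad_of A1 A2 M) c1 c2"
proof -
  obtain u3 u4 where span: "\<forall>p. \<exists>a b \<sigma> \<tau>. p = a *s c1 + b *s c2 + \<sigma> *s u3 + \<tau> *s u4"
    and R: "det (vector [A1 *v c2, A1 *v u3, A1 *v u4] :: complex^3^3) \<noteq> 0"
      "det (vector [A2 *v c1, A2 *v u3, A2 *v u4] :: complex^3^3) \<noteq> 0"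
    using frame_adapted_to_centres[OF ranks c] by blast
  define N where "N = (vector [A2 *v c1, A2 *v u3, A2 *v u4] :: complex^3^3) ** M
      ** transpose (vector [A1 *v c2, A1 *v u3, A1 *v u4] :: complex^3^3)"
  define \<phi> where "\<phi> = bil (A2 *v u3) F (A1 *v u4)"
  note q = det_pencil_in_frame[OF fund c(2,4), of u3 u4 M, folded N_def \<phi>_def]
  have "N$1$1 * \<phi>^2 * l1^2 + \<phi> * skew_coeff N * l1 + det N = 0"
    "N$1$1 * \<phi>^2 * l2^2 + \<phi> * skew_coeff N * l2 + det N = 0"
    "N$1$1 * \<phi>^2 * l0^2 + \<phi> * skew_coeff N * l0 + det N \<noteq> 0"
    using q[of l1] q[of l2] q[of l0] roots(2-4) R by (simp_all flip: q)
  from quadratic_two_roots[OF this(1,2) roots(1) this(3)]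
  have nondeg: "N$1$1 \<noteq> 0" "4 * N$1$1 * det N \<noteq> skew_coeff N ^ 2"
    by (auto simp: algebra_simps power2_eq_square)
  have qf_line: "qf (quad_of A1 A2 M) (a *s c1 + b *s c2) = a * b * N$1$1" for a b
    using c(2,4) by (simp add: qf_quad_of matrix_vector_right_distrib vector_scalar_commute
        bil_linear N_def matrix_mult_transpose_nth)
  show ?thesis
    unfolding permissible_quadric_def smooth_quadric_def
  proof (intro conjI allI impI)
    show "\<exists>p. qf (quad_of A1 A2 M) p \<noteq> 0"
      using qf_line[of 1 1] nondeg(1) by (intro exI[of _ "1 *s c1 + 1 *s c2"]) simp
    show "(quad_of A1 A2 M + transpose (quad_of A1 A2 M)) *v p \<noteq> 0"
      if "p \<noteq> 0 \<and> qf (quad_of A1 A2 M) p = 0" for p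
      using quadric_smooth_in_frame[OF c(2,4) span nondeg[unfolded N_def]] that by blast
    show "qf (quad_of A1 A2 M) c1 = 0" "qf (quad_of A1 A2 M) c2 = 0"
      using qf_line[of 1 0] qf_line[of 0 1] by simp_all
    show "\<not> (\<forall>a b. qf (quad_of A1 A2 M) (a *s c1 + b *s c2) = 0)"
      using qf_line[of 1 1] nondeg(1) by (metis mult_1)
  qed
qed

lemma equals_proj_composite_cross_map:
  assumes ind: "mat_lin_indep L0 L1"
    and M: "on_line L0 L1 M" and F: "on_line L0 L1 F" and MF: "\<not> mproportional M F"
    and fund: "\<forall>p. bil (A2 *v p) F (A1 *v p) = 0"
  shows "equals_proj_composite (cross_map L0 L1) A1 A2 (quad_of A1 A2 M)"
  unfolding equals_proj_composite_def
proof (intro allI impI)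
  fix p
  assume h: "p \<noteq> 0 \<and> qf (quad_of A1 A2 M) p = 0 \<and> A1 *v p \<noteq> 0 \<and> A2 *v p \<noteq> 0
     \<and> cross_map L0 L1 (A1 *v p) \<noteq> 0"
  define x where "x = A1 *v p"
  define y where "y = A2 *v p"
  \<comment> \<open>\<open>y\<^sup>T L x = 0\<close> for \<open>L = M\<close> and \<open>L = F\<close>, hence for every \<open>L\<close> in the pencil\<close>
  have "bil y M x = 0" "bil y F x = 0"
    using h fund by (simp_all add: qf_quad_of x_def y_def)
  then have orth: "dot (L *v x) y = 0" if "in_pencil L0 L1 L" for L
    using in_pencil_span_members[OF ind M F MF that]
    by (auto simp: bil_eq_dot pencil_matrix_vector_mult dot_linear dot_commute[of _ y])
  obtain \<mu> where \<mu>: "y = \<mu> *s cross_map L0 L1 x"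
    using orthogonal_two_imp_parallel_cross orth[OF in_pencil_generators(1)]
      orth[OF in_pencil_generators(2)] h
    unfolding cross_map_def x_def by blast
  with h have "\<mu> \<noteq> 0" by (auto simp: y_def)
  with \<mu> show "proportional (cross_map L0 L1 (A1 *v p)) (A2 *v p)"
    unfolding proportional_def x_def[symmetric] y_def[symmetric]
    by (intro exI[of _ "1 / \<mu>"]) simp
qed

theorem mainTheorem14:
  fixes L0 L1 :: "complex^3^3"
    and F :: "nat \<Rightarrow> complex^3^3"
    and ex ey :: "nat \<Rightarrow> complex^3"
    and P1 P2 :: "nat \<Rightarrow> complex^4^3"
    and c1 c2 :: "nat \<Rightarrow> complex^4"
  assumes generic: "generic_line_with L0 L1 F"
    and nullx: "\<forall>j\<in>{1,2,3}. ex j \<noteq> 0 \<and> F j *v ex j = 0"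
    and nully: "\<forall>j\<in>{1,2,3}. ey j \<noteq> 0 \<and> ey j v* F j = 0"
    and proj: "\<forall>j\<in>{1,2,3}. is_projection (P1 j) \<and> is_projection (P2 j)"
    and centers: "\<forall>j\<in>{1,2,3}. is_center (P1 j) (c1 j) \<and> is_center (P2 j) (c2 j)
                     \<and> \<not> proportional (c1 j) (c2 j)"
    and fund: "\<forall>j\<in>{1,2,3}. is_fundamental_matrix (P1 j) (P2 j) (F j)"
  shows "(\<forall>j\<in>{1,2,3}. \<forall>M. on_line L0 L1 M \<and> \<not> mproportional M (F j) \<longrightarrow>
            permissible_quadric (quad_of (P1 j) (P2 j) M) (c1 j) (c2 j))
       \<and> (\<exists>f g. quadratic_cremona f g
            \<and> base_points f = {x. \<exists>j\<in>{1,2,3}. proportional x (ex j)}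
            \<and> base_points g = {y. \<exists>j\<in>{1,2,3}. proportional y (ey j)}
            \<and> (\<forall>j\<in>{1,2,3}. \<forall>M. on_line L0 L1 M \<and> \<not> mproportional M (F j) \<longrightarrow>
                  equals_proj_composite f (P1 j) (P2 j) (quad_of (P1 j) (P2 j) M)))"
proof (intro conjI ballI allI impI exI)
  fix j M assume j: "j \<in> {1,2,3}" and M: "on_line L0 L1 M \<and> \<not> mproportional M (F j)"
  have fund_j: "\<forall>p. bil (P2 j *v p) (F j) (P1 j *v p) = 0"
    using bspec[OF fund j] by (simp add: is_fundamental_matrix_def)
  obtain l1 l2 l0 where roots: "l1 \<noteq> l2" "det (M + msc l1 (F j)) = 0"
    "det (M + msc l2 (F j)) = 0" "det (M + msc l0 (F j)) \<noteq> 0"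
    using generic_line_pencil_roots[OF generic j] M by blast
  show "permissible_quadric (quad_of (P1 j) (P2 j) M) (c1 j) (c2 j)"
    using permissible_quadric_of_pencil[OF _ _ _ _ _ _ _ fund_j roots]
      bspec[OF proj j] bspec[OF centers j]
    by (simp add: is_projection_def is_center_def)
  show "equals_proj_composite (cross_map L0 L1) (P1 j) (P2 j) (quad_of (P1 j) (P2 j) M)"
    using equals_proj_composite_cross_map[OF generic_line_indep[OF generic] _
        generic_line_member[OF generic j] _ fund_j] M by blast
next
  show "quadratic_cremona (cross_map L0 L1) (cross_map (transpose L0) (transpose L1))"
    using quadratic_cremona_cross_map[OF generic nullx nully] .
  show "base_points (cross_map L0 L1) = {x. \<exists>j\<in>{1,2,3}. proportional x (ex j)}"
    using base_points_cross_map[OF generic nullx] .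
  show "base_points (cross_map (transpose L0) (transpose L1))
      = {y. \<exists>j\<in>{1,2,3}. proportional y (ey j)}"
    using base_points_cross_map[OF generic_line_transpose[OF generic], of ey] nully
    by (simp flip: transpose_matrix_vector)
qed

end
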